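(* Let $I$ be a monomial ideal of a polynomial ring $Q=\Bbbk[x_1,\ldots,x_n]$, let $\mathbb{T}$ be the Taylor resolution of $Q/I$ (with respect to a fixed total order on $G(I)$), equipped with Gemeda's dg algebra structure, and let $A$ be a Morse matching on the Taylor graph of $I$. Suppose that $A_+$ is closed under taking supersets, i.e., if $V\in A_+$ and $V\subseteq W\subseteq G(I)$ then $W\in A_+$. Then the subcomplex $\mathbb{J}$ induced by $A$ is a dg ideal of $\mathbb{T}$ (i.e., $\mathbb{T}\mathbb{J}\subseteq\mathbb{J}$), and consequently $\mathbb{T}/\mathbb{J}$ admits the structure of a differential graded algebra.
   Context: Let $G(I)$ denote the set of minimal monomial generators of $I$, with a fixed total order $<$. For $U\subseteq G(I)$ put $m_U=\mathrm{lcm}\{u: u\in U\}$ ($m_\emptyset=1$). The Taylor resolution $\mathbb{T}$ of $Q/I$ has $\mathbb{T}_i$ free with basis $\{e_U: U\subseteq G(I), |U|=i\}$ and differential $\partial(e_U)=\sum_{u\in U}(-1)^{\sigma(u,U)}\frac{m_U}{m_{U\setminus\{u\}}}e_{U\setminus\{u\}}$, where $\sigma(u,U)=|\{v\in U: v<u\}|$. Gemeda's product: $e_V\cdot e_W=(-1)^{\sigma(V,W)}\frac{m_Vm_W}{m_{V\cup W}}e_{V\cup W}$ if $V\cap W=\emptyset$ and $0$ otherwise, where $\sigma(V,W)=|\{(v,w)\in V\times W: v>w\}|$; this makes $\mathbb{T}$ a dg algebra (graded-commutative, associative, unital, squares of odd elements zero, Leibniz rule $\partial(ab)=\partial(a)b+(-1)^{|a|}a\partial(b)$).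 The Taylor graph of $I$ is the directed graph whose vertices are the subsets of $G(I)$, with an edge $\sigma\to\tau$ iff $\tau\subseteq\sigma$, $|\tau|=|\sigma|-1$, $m_\sigma=m_\tau$ and $|\tau|\ge 2$. A Morse matching is a set $A$ of edges of the Taylor graph, no two sharing a vertex, such that reversing the edges of $A$ yields an acyclic directed graph; $A_+$ is the set of sources and $A_-$ the set of targets of edges in $A$. The subcomplex induced by $A$ is $\mathbb{J}=\bigoplus_{V\in A_+}(Qe_V\oplus Q\partial(e_V))$, i.e., the subcomplex spanned by $e_V$ and $\partial(e_V)$ for $V\in A_+$. A subcomplex $\mathbb{J}$ of a dg algebra $\mathbb{F}$ is a dg ideal if $\mathbb{F}\mathbb{J}\subseteq\mathbb{J}$. *)

theory Defs
  imports Main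
begin

text \<open>Monomials in the variables of the finite type 'v are exponent vectors 'v => nat.
  The polynomial ring is Q = k[x_v : v in 'v] over a field k.\<close>

type_synonym 'v mon = "'v \<Rightarrow> nat"

definition mdvd :: "'v mon \<Rightarrow> 'v mon \<Rightarrow> bool" where
  "mdvd a b = (\<forall>i. a i \<le> b i)"

definition madd :: "'v mon \<Rightarrow> 'v mon \<Rightarrow> 'v mon" where
  "madd a b = (\<lambda>i. a i + b i)"

text \<open>Exponent vector of the quotient a / b (used only when b divides a).\<close>
definition msub :: "'v mon \<Rightarrow> 'v mon \<Rightarrow> 'v mon" where
  "msub a b = (\<lambda>i. a i - b i)"

text \<open>m_U = lcm of the monomials in U; m_{} = 1.\<close>
definition mlcm :: "'v mon set \<Rightarrow> 'v mon" where
  "mlcm U = (\<lambda>i. Max (insert 0 ((\<lambda>u. u i) ` U)))"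

text \<open>A monomial ideal is determined by the set of monomials it contains,
  which is closed under multiplication by monomials.\<close>
definition mono_ideal :: "'v mon set \<Rightarrow> bool" where
  "mono_ideal I = (\<forall>a b. a \<in> I \<longrightarrow> mdvd a b \<longrightarrow> b \<in> I)"

definition mingens :: "'v mon set \<Rightarrow> 'v mon set" where
  "mingens I = {m \<in> I. \<forall>m'\<in>I. mdvd m' m \<longrightarrow> m' = m}"

text \<open>The fixed total order on G(I) is a strict order r; (v,u) in r means v < u.\<close>
definition sigma_el :: "('v mon \<times> 'v mon) set \<Rightarrow> 'v mon \<Rightarrow> 'v mon set \<Rightarrow> nat" where
  "sigma_el r u U = card {v \<in> U. (v, u) \<in> r}"

definition sigma_set :: "('v mon \<times> 'v mon) set \<Rightarrow> 'v mon set \<Rightarrow> 'v mon set \<Rightarrow> nat" where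
  "sigma_set r V W = card {(v, w). v \<in> V \<and> w \<in> W \<and> (w, v) \<in> r}"

text \<open>Elements of the Taylor complex T = (+)_U Q e_U are represented by their
  k-coefficients: f (a, U) is the coefficient of x^a e_U.\<close>
definition taylor :: "'v mon set \<Rightarrow> ('v mon \<times> 'v mon set \<Rightarrow> 'k::field) set" where
  "taylor G = {f. finite {p. f p \<noteq> 0} \<and>
      (\<forall>a U. f (a, U) \<noteq> 0 \<longrightarrow> finite U \<and> U \<subseteq> G)}"

definition tsupp :: "('a \<Rightarrow> 'k::field) \<Rightarrow> 'a set" where
  "tsupp f = {p. f p \<noteq> 0}"

definition tbasis :: "'v mon \<Rightarrow> 'v mon set \<Rightarrow> ('v mon \<times> 'v mon set \<Rightarrow> 'k::field)" where
  "tbasis a U = (\<lambda>p. if p = (a, U) then 1 else 0)"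

definition tmul_basis :: "('v mon \<times> 'v mon) set \<Rightarrow> 'v mon \<Rightarrow> 'v mon set \<Rightarrow> 'v mon \<Rightarrow> 'v mon set
    \<Rightarrow> ('v mon \<times> 'v mon set \<Rightarrow> 'k::field)" where
  "tmul_basis r a V b W =
     (if V \<inter> W = {}
      then (\<lambda>p. if p = (madd (madd a b) (msub (madd (mlcm V) (mlcm W)) (mlcm (V \<union> W))), V \<union> W)
                 then (-1) ^ sigma_set r V W else 0)
      else (\<lambda>p. 0))"

definition tmul :: "('v mon \<times> 'v mon) set \<Rightarrow> ('v mon \<times> 'v mon set \<Rightarrow> 'k::field)
    \<Rightarrow> ('v mon \<times> 'v mon set \<Rightarrow> 'k) \<Rightarrow> ('v mon \<times> 'v mon set \<Rightarrow> 'k)" where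
  "tmul r f g = (\<lambda>c. \<Sum>p\<in>tsupp f. \<Sum>q\<in>tsupp g.
       f p * g q * tmul_basis r (fst p) (snd p) (fst q) (snd q) c)"

definition tdiff_basis :: "('v mon \<times> 'v mon) set \<Rightarrow> 'v mon \<Rightarrow> 'v mon set
    \<Rightarrow> ('v mon \<times> 'v mon set \<Rightarrow> 'k::field)" where
  "tdiff_basis r a U = (\<lambda>c. \<Sum>u\<in>U.
       if c = (madd a (msub (mlcm U) (mlcm (U - {u}))), U - {u}) then (-1) ^ sigma_el r u U else 0)"

definition tdiff :: "('v mon \<times> 'v mon) set \<Rightarrow> ('v mon \<times> 'v mon set \<Rightarrow> 'k::field)
    \<Rightarrow> ('v mon \<times> 'v mon set \<Rightarrow> 'k)" where
  "tdiff r f = (\<lambda>c. \<Sum>p\<in>tsupp f. f p * tdiff_basis r (fst p) (snd p) c)"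

inductive_set kspan :: "('a \<Rightarrow> 'k::field) set \<Rightarrow> ('a \<Rightarrow> 'k) set" for S where
  zero: "(\<lambda>_. 0) \<in> kspan S"
| add: "x \<in> kspan S \<Longrightarrow> g \<in> S \<Longrightarrow> (\<lambda>p. x p + c * g p) \<in> kspan S"

definition taylor_edges :: "'v mon set \<Rightarrow> ('v mon set \<times> 'v mon set) set" where
  "taylor_edges G = {(\<sigma>, \<tau>). finite \<sigma> \<and> \<sigma> \<subseteq> G \<and> \<tau> \<subseteq> \<sigma> \<and> card \<sigma> = card \<tau> + 1
      \<and> mlcm \<sigma> = mlcm \<tau> \<and> 2 \<le> card \<tau>}"

definition morse_matching :: "'v mon set \<Rightarrow> ('v mon set \<times> 'v mon set) set \<Rightarrow> bool" where
  "morse_matching G A =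
     (A \<subseteq> taylor_edges G \<and>
      (\<forall>e\<in>A. \<forall>e'\<in>A. e \<noteq> e' \<longrightarrow> {fst e, snd e} \<inter> {fst e', snd e'} = {}) \<and>
      acyclic ((taylor_edges G - A) \<union> A\<inverse>))"

text \<open>The subcomplex J induced by A: the Q-span of e_V and d(e_V), V in A_+,
  i.e. the k-span of x^a e_V and x^a d(e_V) = d(x^a e_V).\<close>
definition induced_sub :: "('v mon \<times> 'v mon) set \<Rightarrow> ('v mon set \<times> 'v mon set) set
    \<Rightarrow> ('v mon \<times> 'v mon set \<Rightarrow> 'k::field) set" where
  "induced_sub r A = kspan ({tbasis a V | a V. V \<in> fst ` A} \<union>
                            {tdiff r (tbasis a V) | a V. V \<in> fst ` A})"

definition dg_ideal :: "'v mon set \<Rightarrow> ('v mon \<times> 'v mon) set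
    \<Rightarrow> ('v mon \<times> 'v mon set \<Rightarrow> 'k::field) set \<Rightarrow> bool" where
  "dg_ideal G r J = (J \<subseteq> taylor G \<and> (\<forall>j\<in>J. tdiff r j \<in> J) \<and>
      (\<forall>f\<in>taylor G. \<forall>j\<in>J. tmul r f j \<in> J))"

end

theory Submission imports Defs begin

text \<open>Since A_+ is closed under supersets, a product x^a e_W * x^b e_V is zero or a multiple of some
e_U with U in A_+. For a product with d(x^b e_V) one uses the Leibniz rule
e_W d(e_V) = (-1)^|W| (d(e_W e_V) - d(e_W) e_V): if W and V are disjoint, d(e_W e_V) is the
differential of a basis element indexed by W \<union> V in A_+, and every term of d(e_W) e_V is
indexed by a superset of V; if they meet, the only surviving terms of e_W d(e_V) are indexed by
W \<union> V. Finally d J \<subseteq> J because d^2 = 0.\<close>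

lemma kspan_base: "g \<in> S \<Longrightarrow> g \<in> kspan S"
  using kspan.add[OF kspan.zero, of g S 1] by simp

lemma kspan_add:
  assumes "x \<in> kspan S" "y \<in> kspan S"
  shows "(\<lambda>p. x p + y p) \<in> kspan S"
  using assms(2)
proof induct
  case zero
  then show ?case using assms(1) by simp
next
  case (add y g c)
  have "(\<lambda>p. x p + (y p + c * g p)) = (\<lambda>p. (\<lambda>p. x p + y p) p + c * g p)"
    by (simp add: add.assoc)
  then show ?case using kspan.add[OF add(2) add(3), of c] by simp
qed

lemma kspan_smult:
  assumes "x \<in> kspan S"
  shows "(\<lambda>p. c * x p) \<in> kspan S"
  using assms
proof induct
  case zero
  then show ?case using kspan.zero by simp
next
  case (add y g d)
  have "(\<lambda>p. c * (y p + d * g p)) = (\<lambda>p. (\<lambda>p. c * y p) p + (c * d) * g p)"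
    by (simp add: algebra_simps)
  then show ?case using kspan.add[OF add(2) add(3), of "c * d"] by simp
qed

lemma kspan_lin_comb:
  assumes "x \<in> kspan S" "y \<in> kspan S"
  shows "(\<lambda>p. c * x p + d * y p) \<in> kspan S"
  using kspan_add[OF kspan_smult[OF assms(1)] kspan_smult[OF assms(2)]] by simp

lemma kspan_sum:
  assumes "finite F" "\<And>i. i \<in> F \<Longrightarrow> h i \<in> kspan S"
  shows "(\<lambda>p. \<Sum>i\<in>F. h i p) \<in> kspan S"
  using assms
proof (induct F rule: finite_induct)
  case empty
  then show ?case using kspan.zero by simp
next
  case (insert x F)
  then show ?case using kspan_add[OF insert(4)[of x] insert(3)] by simp
qed

definition lin_ext :: "('a \<Rightarrow> 'b \<Rightarrow> 'k::field) \<Rightarrow> ('a \<Rightarrow> 'k) \<Rightarrow> 'b \<Rightarrow> 'k" where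
  "lin_ext K g = (\<lambda>c. \<Sum>p\<in>tsupp g. g p * K p c)"

lemma tsupp_lin_comb_finite:
  "finite (tsupp x) \<Longrightarrow> finite (tsupp g) \<Longrightarrow> finite (tsupp (\<lambda>p. x p + c * g p))"
  by (rule finite_subset[of _ "tsupp x \<union> tsupp g"]) (auto simp: tsupp_def)

lemma lin_ext_superset:
  assumes "finite S" "tsupp g \<subseteq> S"
  shows "lin_ext K g c = (\<Sum>p\<in>S. g p * K p c)"
  unfolding lin_ext_def
  by (rule sum.mono_neutral_left) (use assms in \<open>auto simp: tsupp_def\<close>)

lemma lin_ext_zero: "lin_ext K (\<lambda>_. 0) = (\<lambda>_. 0)"
  by (simp add: lin_ext_def tsupp_def)

lemma lin_ext_lin_comb:
  assumes "finite (tsupp x)" "finite (tsupp g)"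
  shows "lin_ext K (\<lambda>p. x p + c * g p) = (\<lambda>z. lin_ext K x z + c * lin_ext K g z)"
proof
  fix z
  let ?S = "tsupp x \<union> tsupp g"
  have fin: "finite ?S" using assms by simp
  have "tsupp (\<lambda>p. x p + c * g p) \<subseteq> ?S" by (auto simp: tsupp_def)
  then have "lin_ext K (\<lambda>p. x p + c * g p) z = (\<Sum>p\<in>?S. (x p + c * g p) * K p z)"
    by (rule lin_ext_superset[OF fin])
  also have "\<dots> = (\<Sum>p\<in>?S. x p * K p z) + c * (\<Sum>p\<in>?S. g p * K p z)"
    by (simp add: distrib_right sum.distrib sum_distrib_left mult.assoc)
  also have "\<dots> = lin_ext K x z + c * lin_ext K g z"
    using lin_ext_superset[OF fin, of x K z] lin_ext_superset[OF fin, of g K z] by auto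
  finally show "lin_ext K (\<lambda>p. x p + c * g p) z = lin_ext K x z + c * lin_ext K g z" .
qed

lemma kspan_lin_ext:
  assumes "x \<in> kspan S" "\<And>g. g \<in> S \<Longrightarrow> finite (tsupp g) \<and> lin_ext K g \<in> kspan T"
  shows "finite (tsupp x) \<and> lin_ext K x \<in> kspan T"
  using assms(1)
proof induct
  case zero
  then show ?case by (simp add: lin_ext_zero kspan.zero tsupp_def)
next
  case (add y g c)
  have g: "finite (tsupp g)" "lin_ext K g \<in> kspan T" using assms(2)[OF add(3)] by auto
  have "(\<lambda>z. 1 * lin_ext K y z + c * lin_ext K g z) \<in> kspan T"
    using kspan_lin_comb add(2) g(2) by blast
  then show ?case using lin_ext_lin_comb[of y g K c] tsupp_lin_comb_finite[of y g c] add(2) g(1)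
    by simp
qed

lemma tsupp_tbasis: "tsupp (tbasis a U :: _ \<Rightarrow> 'k::field) = {(a, U)}"
  by (auto simp: tsupp_def tbasis_def)

lemma lin_ext_tbasis: "lin_ext K (tbasis a U) = K (a, U)"
  unfolding lin_ext_def tsupp_tbasis by (simp add: tbasis_def)

lemma lin_ext_sum_tbasis:
  assumes "finite F"
  shows "lin_ext K (\<lambda>c. \<Sum>u\<in>F. s u * tbasis (x u) (y u) c) = (\<lambda>z. \<Sum>u\<in>F. s u * K (x u, y u) z)"
proof
  fix z
  let ?S = "(\<lambda>u. (x u, y u)) ` F"
  have fin: "finite ?S" using assms by simp
  have "tsupp (\<lambda>c. \<Sum>u\<in>F. s u * tbasis (x u) (y u) c) \<subseteq> ?S"
  proof
    fix p assume "p \<in> tsupp (\<lambda>c. \<Sum>u\<in>F. s u * tbasis (x u) (y u) c)"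
    then have "(\<Sum>u\<in>F. s u * tbasis (x u) (y u) p) \<noteq> 0" by (simp add: tsupp_def)
    then obtain u where "u \<in> F" "s u * tbasis (x u) (y u) p \<noteq> 0"
      by (rule sum.not_neutral_contains_not_neutral)
    then show "p \<in> ?S" by (auto simp: tbasis_def split: if_splits)
  qed
  then have "lin_ext K (\<lambda>c. \<Sum>u\<in>F. s u * tbasis (x u) (y u) c) z
      = (\<Sum>p\<in>?S. (\<Sum>u\<in>F. s u * tbasis (x u) (y u) p) * K p z)"
    by (rule lin_ext_superset[OF fin])
  also have "\<dots> = (\<Sum>u\<in>F. \<Sum>p\<in>?S. s u * tbasis (x u) (y u) p * K p z)"
    by (simp only: sum_distrib_right) (rule sum.swap)
  also have "\<dots> = (\<Sum>u\<in>F. s u * K (x u, y u) z)"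
  proof (rule sum.cong[OF refl])
    fix u assume "u \<in> F"
    then have "(\<Sum>p\<in>?S. s u * tbasis (x u) (y u) p * K p z)
        = (\<Sum>p\<in>?S. if p = (x u, y u) then s u * K (x u, y u) z else 0)"
      by (intro sum.cong) (auto simp: tbasis_def)
    also have "\<dots> = s u * K (x u, y u) z" using fin \<open>u \<in> F\<close> by (simp add: sum.delta)
    finally show "(\<Sum>p\<in>?S. s u * tbasis (x u) (y u) p * K p z) = s u * K (x u, y u) z" .
  qed
  finally show "lin_ext K (\<lambda>c. \<Sum>u\<in>F. s u * tbasis (x u) (y u) c) z
      = (\<Sum>u\<in>F. s u * K (x u, y u) z)" .
qed

lemma tdiff_eq_lin_ext: "tdiff r g = lin_ext (\<lambda>p. tdiff_basis r (fst p) (snd p)) g"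
  by (simp add: tdiff_def lin_ext_def)

lemma tdiff_tbasis: "tdiff r (tbasis a V) = tdiff_basis r a V"
  by (simp add: tdiff_eq_lin_ext lin_ext_tbasis)

lemma tmul_tbasis_eq_lin_ext: "tmul r (tbasis a W) g = lin_ext (\<lambda>q. tmul_basis r a W (fst q) (snd q)) g"
  unfolding lin_ext_def tmul_def tsupp_tbasis by (simp add: tbasis_def)

lemma tmul_eq_sum_tbasis:
  assumes "finite (tsupp f)"
  shows "tmul r f g = (\<lambda>c. \<Sum>p\<in>tsupp f. f p * tmul r (tbasis (fst p) (snd p)) g c)"
  unfolding tmul_tbasis_eq_lin_ext by (auto simp: tmul_def lin_ext_def sum_distrib_left mult.assoc)

definition tdiff_term :: "('v mon \<times> 'v mon) set \<Rightarrow> 'v mon \<Rightarrow> 'v mon set \<Rightarrow> 'v mon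
    \<Rightarrow> ('v mon \<times> 'v mon set \<Rightarrow> 'k::field)" where
  "tdiff_term r a U u = (\<lambda>c. (-1) ^ sigma_el r u U *
      tbasis (madd a (msub (mlcm U) (mlcm (U - {u})))) (U - {u}) c)"

lemma tdiff_basis_eq_sum_terms: "tdiff_basis r a U = (\<lambda>c. \<Sum>u\<in>U. tdiff_term r a U u c)"
  unfolding tdiff_basis_def tdiff_term_def tbasis_def by (intro ext sum.cong) auto

lemma tmul_basis_disjoint:
  "V \<inter> W = {} \<Longrightarrow> tmul_basis r a V b W = (\<lambda>c. (-1) ^ sigma_set r V W *
      tbasis (madd (madd a b) (msub (madd (mlcm V) (mlcm W)) (mlcm (V \<union> W)))) (V \<union> W) c)"
  unfolding tmul_basis_def tbasis_def by auto

lemma tmul_basis_overlapping: "V \<inter> W \<noteq> {} \<Longrightarrow> tmul_basis r a V b W = (\<lambda>_. 0)"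
  unfolding tmul_basis_def by auto

lemma mlcm_mono: "finite V \<Longrightarrow> U \<subseteq> V \<Longrightarrow> mlcm U i \<le> mlcm V i"
  unfolding mlcm_def by (rule Max_mono) auto

lemma mlcm_ge: "finite V \<Longrightarrow> u \<in> V \<Longrightarrow> u i \<le> mlcm V i"
  unfolding mlcm_def by (rule Max_ge) auto

lemma mlcm_Un_le:
  assumes "finite V" "finite W"
  shows "mlcm (W \<union> V) i \<le> mlcm W i + mlcm V i"
proof -
  have "\<forall>x\<in>insert 0 ((\<lambda>u. u i) ` (W \<union> V)). x \<le> mlcm W i + mlcm V i"
    using mlcm_ge[OF assms(1)] mlcm_ge[OF assms(2)] by (fastforce intro: trans_le_add1 trans_le_add2)
  then show ?thesis unfolding mlcm_def[of "W \<union> V"] using assms by (subst Max_le_iff) auto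
qed

lemma madd_msub_mlcm_telescope:
  assumes "finite V" "W \<subseteq> U" "U \<subseteq> V"
  shows "madd (madd a (msub (mlcm V) (mlcm U))) (msub (mlcm U) (mlcm W))
      = madd a (msub (mlcm V) (mlcm W))"
proof
  fix i
  have "mlcm U i \<le> mlcm V i" by (rule mlcm_mono[OF assms(1,3)])
  moreover have "mlcm W i \<le> mlcm U i"
    by (rule mlcm_mono[OF finite_subset[OF assms(3,1)] assms(2)])
  ultimately show "madd (madd a (msub (mlcm V) (mlcm U))) (msub (mlcm U) (mlcm W)) i
      = madd a (msub (mlcm V) (mlcm W)) i"
    unfolding madd_def msub_def by simp
qed

text \<open>The monomial coefficients of e_W d(e_V) and d(e_W e_V) agree term by term.\<close>
lemma madd_msub_mlcm_Leibniz:
  assumes "finite W" "finite V" "v \<in> V" "v \<notin> W"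
  shows "madd (madd a (madd b (msub (mlcm V) (mlcm (V - {v})))))
            (msub (madd (mlcm W) (mlcm (V - {v}))) (mlcm (W \<union> (V - {v}))))
       = madd (madd (madd a b) (msub (madd (mlcm W) (mlcm V)) (mlcm (W \<union> V))))
            (msub (mlcm (W \<union> V)) (mlcm (W \<union> V - {v})))"
proof
  fix i
  have "W \<union> V - {v} = W \<union> (V - {v})" using assms(4) by auto
  moreover have "mlcm (V - {v}) i \<le> mlcm V i" by (rule mlcm_mono) (use assms in auto)
  moreover have "mlcm (W \<union> (V - {v})) i \<le> mlcm W i + mlcm (V - {v}) i"
    by (rule mlcm_Un_le) (use assms in auto)
  moreover have "mlcm (W \<union> V) i \<le> mlcm W i + mlcm V i" by (rule mlcm_Un_le) (use assms in auto)
  moreover have "mlcm (W \<union> (V - {v})) i \<le> mlcm (W \<union> V) i" by (rule mlcm_mono) (use assms in auto)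
  ultimately show "madd (madd a (madd b (msub (mlcm V) (mlcm (V - {v})))))
            (msub (madd (mlcm W) (mlcm (V - {v}))) (mlcm (W \<union> (V - {v})))) i
       = madd (madd (madd a b) (msub (madd (mlcm W) (mlcm V)) (mlcm (W \<union> V))))
            (msub (mlcm (W \<union> V)) (mlcm (W \<union> V - {v}))) i"
    unfolding madd_def msub_def by simp
qed

lemma taylor_finite_tsupp: "f \<in> taylor G \<Longrightarrow> finite (tsupp f)"
  by (simp add: taylor_def tsupp_def)

lemma taylor_lin_comb:
  assumes "x \<in> taylor G" "g \<in> taylor G"
  shows "(\<lambda>p. x p + c * g p) \<in> taylor G"
proof -
  have "finite {p. x p + c * g p \<noteq> 0}"
    by (rule finite_subset[of _ "{p. x p \<noteq> 0} \<union> {p. g p \<noteq> 0}"])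
      (use assms in \<open>auto simp: taylor_def\<close>)
  moreover have "finite U \<and> U \<subseteq> G" if "x (a, U) + c * g (a, U) \<noteq> 0" for a U
  proof -
    from that have "x (a, U) \<noteq> 0 \<or> g (a, U) \<noteq> 0" by auto
    then show ?thesis using assms unfolding taylor_def by blast
  qed
  ultimately show ?thesis unfolding taylor_def by blast
qed

lemma kspan_subset_taylor:
  assumes "S \<subseteq> taylor G"
  shows "kspan S \<subseteq> taylor G"
proof
  fix x assume "x \<in> kspan S"
  then show "x \<in> taylor G"
  proof induct
    case zero
    then show ?case by (simp add: taylor_def)
  next
    case (add x g c)
    then show ?case using taylor_lin_comb assms by blast
  qed
qed

lemma tbasis_in_taylor: "finite V \<Longrightarrow> V \<subseteq> G \<Longrightarrow> tbasis a V \<in> taylor G"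
  unfolding taylor_def tbasis_def by (auto split: if_splits)

lemma tdiff_basis_in_taylor:
  assumes "finite V" "V \<subseteq> G"
  shows "(tdiff_basis r a V :: _ \<Rightarrow> 'k::field) \<in> taylor G"
proof -
  define y where "y u = madd a (msub (mlcm V) (mlcm (V - {u})))" for u
  have supp: "\<exists>u\<in>V. p = (y u, V - {u})" if "tdiff_basis r a V p \<noteq> (0::'k)" for p
  proof -
    from that obtain u where "u \<in> V" "tdiff_term r a V u p \<noteq> (0::'k)"
      unfolding tdiff_basis_eq_sum_terms by (auto elim: sum.not_neutral_contains_not_neutral)
    then show ?thesis by (auto simp: tdiff_term_def tbasis_def y_def split: if_splits)
  qed
  then have "{p. tdiff_basis r a V p \<noteq> (0::'k)} \<subseteq> (\<lambda>u. (y u, V - {u})) ` V" by blast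
  then have "finite {p. tdiff_basis r a V p \<noteq> (0::'k)}" using assms(1) finite_subset by blast
  moreover have "finite U \<and> U \<subseteq> G" if "tdiff_basis r a V (b, U) \<noteq> (0::'k)" for b U
    using supp[OF that] assms by auto
  ultimately show ?thesis unfolding taylor_def by blast
qed

lemma sum_offdiag_antisym_eq_0:
  fixes F :: "'a \<Rightarrow> 'a \<Rightarrow> 'k::comm_ring_1"
  assumes fin: "finite V"
    and total: "\<And>u w. u \<in> V \<Longrightarrow> w \<in> V \<Longrightarrow> u \<noteq> w \<Longrightarrow> (u, w) \<in> r \<or> (w, u) \<in> r"
    and asym: "\<And>u w. (u, w) \<in> r \<Longrightarrow> (w, u) \<notin> r"
    and antisym: "\<And>u w. u \<in> V \<Longrightarrow> w \<in> V \<Longrightarrow> (u, w) \<in> r \<Longrightarrow> F w u = - F u w"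
  shows "(\<Sum>u\<in>V. \<Sum>w\<in>V - {u}. F u w) = 0"
proof -
  let ?P = "Sigma V (\<lambda>u. V - {u})"
  let ?P1 = "{p \<in> ?P. p \<in> r}"
  let ?P2 = "{p \<in> ?P. prod.swap p \<in> r}"
  have "(\<Sum>u\<in>V. \<Sum>w\<in>V - {u}. F u w) = (\<Sum>p\<in>?P. F (fst p) (snd p))"
    using sum.Sigma[of V "\<lambda>u. V - {u}" F] fin by (simp add: split_def)
  also have "?P = ?P1 \<union> ?P2" using total by fastforce
  also have "(\<Sum>p\<in>?P1 \<union> ?P2. F (fst p) (snd p))
      = (\<Sum>p\<in>?P1. F (fst p) (snd p)) + (\<Sum>p\<in>?P2. F (fst p) (snd p))"
    by (rule sum.union_disjoint) (use fin asym in auto)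
  also have "?P2 = prod.swap ` ?P1" by (auto simp: image_iff)
  also have "(\<Sum>p\<in>prod.swap ` ?P1. F (fst p) (snd p)) = (\<Sum>p\<in>?P1. F (snd p) (fst p))"
    by (subst sum.reindex) (auto simp: inj_on_def)
  also have "\<dots> = (\<Sum>p\<in>?P1. - F (fst p) (snd p))"
    by (rule sum.cong) (auto intro: antisym)
  finally show ?thesis by (simp add: sum_negf)
qed

locale taylor_order =
  fixes G :: "'v mon set" and r :: "('v mon \<times> 'v mon) set"
  assumes strict_linear: "strict_linear_order_on G r"
begin

lemma order_total: "x \<in> G \<Longrightarrow> y \<in> G \<Longrightarrow> x \<noteq> y \<Longrightarrow> (x, y) \<in> r \<or> (y, x) \<in> r"
  using strict_linear unfolding strict_linear_order_on_def total_on_def by blast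

lemma order_asym: "(x, y) \<in> r \<Longrightarrow> (y, x) \<notin> r"
  using strict_linear unfolding strict_linear_order_on_def trans_def irrefl_def by blast

lemma sigma_el_remove_smaller:
  assumes "finite V" "u \<in> V" "(u, w) \<in> r"
  shows "sigma_el r w V = Suc (sigma_el r w (V - {u}))"
proof -
  have "{v \<in> V - {u}. (v, w) \<in> r} = {v \<in> V. (v, w) \<in> r} - {u}" by auto
  then show ?thesis
    unfolding sigma_el_def using assms card_Suc_Diff1[of "{v \<in> V. (v, w) \<in> r}" u] by simp
qed

lemma sigma_el_remove_larger: "(u, w) \<in> r \<Longrightarrow> sigma_el r u (V - {w}) = sigma_el r u V"
  unfolding sigma_el_def using order_asym by (metis (lifting) Diff_iff singletonD)

text \<open>d^2 = 0: the two ways of deleting u and w from V carry opposite signs.\<close>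
lemma tdiff_tdiff_basis:
  assumes fin: "finite V" and sub: "V \<subseteq> G"
  shows "tdiff r (tdiff_basis r a V) = ((\<lambda>_. 0) :: _ \<Rightarrow> 'k::field)"
proof
  fix z
  define s where "s u = ((-1::'k) ^ sigma_el r u V)" for u
  define x where "x u = madd a (msub (mlcm V) (mlcm (V - {u})))" for u
  define F where "F u w = s u * (if z = (madd (x u) (msub (mlcm (V - {u})) (mlcm (V - {u} - {w}))),
      V - {u} - {w}) then (-1::'k) ^ sigma_el r w (V - {u}) else 0)" for u w
  have "tdiff r (tdiff_basis r a V) z = (\<Sum>u\<in>V. s u * tdiff_basis r (x u) (V - {u}) z)"
    unfolding tdiff_eq_lin_ext tdiff_basis_eq_sum_terms tdiff_term_def
    by (simp add: lin_ext_sum_tbasis[OF fin] s_def x_def)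
  also have "\<dots> = (\<Sum>u\<in>V. \<Sum>w\<in>V - {u}. F u w)"
    unfolding tdiff_basis_def F_def by (simp add: sum_distrib_left)
  also have "\<dots> = 0"
  proof (rule sum_offdiag_antisym_eq_0[OF fin, of r])
    fix u w assume u: "u \<in> V" and w: "w \<in> V" and uw: "(u, w) \<in> r"
    have S: "V - {w} - {u} = V - {u} - {w}" by auto
    have "madd (x u) (msub (mlcm (V - {u})) (mlcm (V - {u} - {w})))
        = madd a (msub (mlcm V) (mlcm (V - {u} - {w})))"
      unfolding x_def by (rule madd_msub_mlcm_telescope[OF fin]) auto
    moreover have "madd (x w) (msub (mlcm (V - {w})) (mlcm (V - {w} - {u})))
        = madd a (msub (mlcm V) (mlcm (V - {u} - {w})))"
      unfolding x_def S[symmetric] by (rule madd_msub_mlcm_telescope[OF fin]) auto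
    moreover have "s w * (-1::'k) ^ sigma_el r u (V - {w}) = - (s u * (-1) ^ sigma_el r w (V - {u}))"
      unfolding s_def sigma_el_remove_smaller[OF fin u uw] sigma_el_remove_larger[OF uw] by simp
    ultimately show "F w u = - F u w" unfolding F_def S by (simp add: mult.commute)
  qed (use order_total sub order_asym in blast)+
  finally show "tdiff r (tdiff_basis r a V) z = (0::'k)" .
qed

lemma sigma_el_Un_disjoint:
  assumes "finite W" "finite V" "W \<inter> V = {}"
  shows "sigma_el r v (W \<union> V) = sigma_el r v V + card {w \<in> W. (w, v) \<in> r}"
proof -
  have "{x \<in> W \<union> V. (x, v) \<in> r} = {x \<in> V. (x, v) \<in> r} \<union> {x \<in> W. (x, v) \<in> r}" by auto
  moreover have "card ({x \<in> V. (x, v) \<in> r} \<union> {x \<in> W. (x, v) \<in> r})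
      = card {x \<in> V. (x, v) \<in> r} + card {x \<in> W. (x, v) \<in> r}"
    by (rule card_Un_disjoint) (use assms in auto)
  ultimately show ?thesis unfolding sigma_el_def by simp
qed

lemma sigma_set_remove:
  assumes fW: "finite W" and fV: "finite V" and v: "v \<in> V"
  shows "sigma_set r W V = sigma_set r W (V - {v}) + card {w \<in> W. (v, w) \<in> r}"
proof -
  let ?X = "{(w, x). w \<in> W \<and> x \<in> V - {v} \<and> (x, w) \<in> r}"
  let ?Y = "(\<lambda>w. (w, v)) ` {w \<in> W. (v, w) \<in> r}"
  have eq: "{(w, x). w \<in> W \<and> x \<in> V \<and> (x, w) \<in> r} = ?X \<union> ?Y" using v by auto
  have "finite ?X" by (rule finite_subset[of _ "W \<times> V"]) (use fW fV in auto)
  then have "card (?X \<union> ?Y) = card ?X + card ?Y" by (intro card_Un_disjoint) (use fW in auto)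
  moreover have "card ?Y = card {w \<in> W. (v, w) \<in> r}" by (rule card_image) (auto simp: inj_on_def)
  ultimately show ?thesis unfolding sigma_set_def eq by simp
qed

lemma card_below_plus_above:
  assumes "finite W" "W \<subseteq> G" "v \<in> G" "v \<notin> W"
  shows "card {w \<in> W. (w, v) \<in> r} + card {w \<in> W. (v, w) \<in> r} = card W"
proof -
  have "W = {w \<in> W. (w, v) \<in> r} \<union> {w \<in> W. (v, w) \<in> r}" using order_total assms by fastforce
  moreover have "card ({w \<in> W. (w, v) \<in> r} \<union> {w \<in> W. (v, w) \<in> r})
      = card {w \<in> W. (w, v) \<in> r} + card {w \<in> W. (v, w) \<in> r}"
    by (rule card_Un_disjoint) (use assms order_asym in auto)
  ultimately show ?thesis by simp
qed

lemma sign_Leibniz: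
  assumes fW: "finite W" and fV: "finite V" and WG: "W \<subseteq> G" and VG: "V \<subseteq> G"
    and disj: "W \<inter> V = {}" and v: "v \<in> V"
  shows "(-1::'k::comm_ring_1) ^ sigma_el r v V * (-1) ^ sigma_set r W (V - {v})
       = (-1) ^ (card W + sigma_set r W V) * (-1) ^ sigma_el r v (W \<union> V)"
proof -
  have "card {w \<in> W. (w, v) \<in> r} + card {w \<in> W. (v, w) \<in> r} = card W"
    using card_below_plus_above[OF fW WG, of v] v VG disj by auto
  then have "card W + sigma_set r W V + sigma_el r v (W \<union> V)
      = (sigma_el r v V + sigma_set r W (V - {v})) + 2 * card W"
    using sigma_el_Un_disjoint[OF fW fV disj] sigma_set_remove[OF fW fV v] by simp
  then have "(-1::'k) ^ (card W + sigma_set r W V + sigma_el r v (W \<union> V))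
      = (-1) ^ (sigma_el r v V + sigma_set r W (V - {v}))"
    by (simp only:) (simp add: power_add power_mult)
  then show ?thesis by (metis power_add)
qed

text \<open>The Leibniz rule e_W d(e_V) = (-1)^|W| (d(e_W e_V) - d(e_W) e_V) for disjoint W and V,
  with d(e_W) e_V written out as the terms of d(e_{W \<union> V}) that delete an element of W.\<close>
lemma tmul_tdiff_basis_disjoint:
  fixes a b :: "'v mon"
  assumes fW: "finite W" and fV: "finite V" and WG: "W \<subseteq> G" and VG: "V \<subseteq> G"
    and disj: "W \<inter> V = {}"
  defines "c \<equiv> madd (madd a b) (msub (madd (mlcm W) (mlcm V)) (mlcm (W \<union> V)))"
    and "\<epsilon> \<equiv> (-1::'k::field) ^ (card W + sigma_set r W V)"
  shows "lin_ext (\<lambda>q. tmul_basis r a W (fst q) (snd q)) (tdiff_basis r b V)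
       = (\<lambda>z. \<epsilon> * tdiff_basis r c (W \<union> V) z + (- \<epsilon>) * (\<Sum>x\<in>W. tdiff_term r c (W \<union> V) x z))"
proof
  fix z
  let ?T = "\<lambda>x. tdiff_term r c (W \<union> V) x z"
  have coeff: "(-1::'k) ^ sigma_el r v V
      * tmul_basis r a W (madd b (msub (mlcm V) (mlcm (V - {v})))) (V - {v}) z = \<epsilon> * ?T v"
    if v: "v \<in> V" for v
  proof -
    have d: "W \<inter> (V - {v}) = {}" using disj by auto
    have vW: "v \<notin> W" using disj v by auto
    then have U: "W \<union> (V - {v}) = W \<union> V - {v}" by auto
    show ?thesis
      unfolding tmul_basis_disjoint[OF d] madd_msub_mlcm_Leibniz[OF fW fV v vW]
      unfolding tdiff_term_def U c_def \<epsilon>_def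
      by (simp only: mult.assoc[symmetric] sign_Leibniz[OF fW fV WG VG disj v])
  qed
  have "lin_ext (\<lambda>q. tmul_basis r a W (fst q) (snd q)) (tdiff_basis r b V) z = (\<Sum>v\<in>V. \<epsilon> * ?T v)"
    using coeff unfolding tdiff_basis_eq_sum_terms
    by (simp add: tdiff_term_def lin_ext_sum_tbasis[OF fV])
  also have "\<dots> = \<epsilon> * ((\<Sum>x\<in>W. ?T x) + (\<Sum>x\<in>V. ?T x)) + (- \<epsilon>) * (\<Sum>x\<in>W. ?T x)"
    by (simp add: sum_distrib_left ring_distribs sum_negf)
  also have "\<dots> = \<epsilon> * tdiff_basis r c (W \<union> V) z + (- \<epsilon>) * (\<Sum>x\<in>W. ?T x)"
    unfolding tdiff_basis_eq_sum_terms by (simp add: sum.union_disjoint[OF fW fV disj])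
  finally show "lin_ext (\<lambda>q. tmul_basis r a W (fst q) (snd q)) (tdiff_basis r b V) z
      = \<epsilon> * tdiff_basis r c (W \<union> V) z + (- \<epsilon>) * (\<Sum>x\<in>W. ?T x)" .
qed

end

definition induced_span :: "('v mon \<times> 'v mon) set \<Rightarrow> 'v mon set set
    \<Rightarrow> ('v mon \<times> 'v mon set \<Rightarrow> 'k::field) set" where
  "induced_span r P = kspan ({tbasis a V | a V. V \<in> P} \<union> {tdiff r (tbasis a V) | a V. V \<in> P})"

lemma induced_span_zero: "(\<lambda>_. 0) \<in> induced_span r P"
  unfolding induced_span_def by (rule kspan.zero)

lemma induced_span_smult: "x \<in> induced_span r P \<Longrightarrow> (\<lambda>p. c * x p) \<in> induced_span r P"
  unfolding induced_span_def by (rule kspan_smult)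

lemma induced_span_lin_comb:
  "x \<in> induced_span r P \<Longrightarrow> y \<in> induced_span r P \<Longrightarrow> (\<lambda>p. c * x p + d * y p) \<in> induced_span r P"
  unfolding induced_span_def by (rule kspan_lin_comb)

lemma induced_span_sum:
  "finite F \<Longrightarrow> (\<And>i. i \<in> F \<Longrightarrow> h i \<in> induced_span r P) \<Longrightarrow> (\<lambda>p. \<Sum>i\<in>F. h i p) \<in> induced_span r P"
  unfolding induced_span_def by (rule kspan_sum)

locale upward_closed_family = taylor_order +
  fixes P :: "'v mon set set"
  assumes P_finite: "V \<in> P \<Longrightarrow> finite V"
    and P_subset: "V \<in> P \<Longrightarrow> V \<subseteq> G"
    and P_upward: "V \<in> P \<Longrightarrow> V \<subseteq> W \<Longrightarrow> W \<subseteq> G \<Longrightarrow> W \<in> P"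
begin

lemma tbasis_in_induced_span: "V \<in> P \<Longrightarrow> (tbasis a V :: _ \<Rightarrow> 'k::field) \<in> induced_span r P"
  unfolding induced_span_def by (rule kspan_base) blast

lemma tdiff_basis_in_induced_span:
  "V \<in> P \<Longrightarrow> (tdiff_basis r a V :: _ \<Rightarrow> 'k::field) \<in> induced_span r P"
  unfolding induced_span_def tdiff_tbasis[symmetric] by (rule kspan_base) blast

lemma tdiff_term_in_induced_span:
  "U - {u} \<in> P \<Longrightarrow> (tdiff_term r a U u :: _ \<Rightarrow> 'k::field) \<in> induced_span r P"
  unfolding tdiff_term_def by (intro induced_span_smult tbasis_in_induced_span)

lemma induced_span_subset_taylor: "(induced_span r P :: (_ \<Rightarrow> 'k::field) set) \<subseteq> taylor G"
  unfolding induced_span_def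
  by (rule kspan_subset_taylor)
    (auto simp: tdiff_tbasis intro!: tbasis_in_taylor tdiff_basis_in_taylor P_finite P_subset)

lemma lin_ext_in_induced_span:
  fixes K :: "_ \<Rightarrow> _ \<Rightarrow> 'k::field"
  assumes "j \<in> induced_span r P"
    and "\<And>b V. V \<in> P \<Longrightarrow> K (b, V) \<in> induced_span r P"
    and "\<And>b V. V \<in> P \<Longrightarrow> lin_ext K (tdiff_basis r b V) \<in> induced_span r P"
  shows "lin_ext K j \<in> induced_span r P"
proof -
  have generators: "finite (tsupp g) \<and> lin_ext K g \<in> induced_span r P"
    if "g \<in> {tbasis a V | a V. V \<in> P} \<union> {tdiff r (tbasis a V) | a V. V \<in> P}" for g
    using that
  proof
    assume "g \<in> {tbasis a V | a V. V \<in> P}"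
    then obtain b V where "g = tbasis b V" "V \<in> P" by blast
    then show ?thesis using assms(2) by (simp add: lin_ext_tbasis tsupp_tbasis)
  next
    assume "g \<in> {tdiff r (tbasis a V) | a V. V \<in> P}"
    then obtain b V where g: "g = tdiff_basis r b V" and V: "V \<in> P" by (auto simp: tdiff_tbasis)
    have "finite (tsupp g)"
      using taylor_finite_tsupp[OF tdiff_basis_in_taylor[OF P_finite[OF V] P_subset[OF V]]] g by simp
    then show ?thesis using assms(3)[OF V] g by simp
  qed
  show ?thesis
    using kspan_lin_ext[OF assms(1)[unfolded induced_span_def] generators[unfolded induced_span_def]]
    unfolding induced_span_def by (rule conjunct2)
qed

lemma tdiff_in_induced_span:
  assumes "j \<in> (induced_span r P :: (_ \<Rightarrow> 'k::field) set)"
  shows "tdiff r j \<in> induced_span r P"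
  unfolding tdiff_eq_lin_ext
proof (rule lin_ext_in_induced_span[OF assms])
  fix b V assume "V \<in> P"
  then show "tdiff_basis r (fst (b, V)) (snd (b, V)) \<in> (induced_span r P :: (_ \<Rightarrow> 'k) set)"
    by (simp add: tdiff_basis_in_induced_span)
  have "lin_ext (\<lambda>p. tdiff_basis r (fst p) (snd p)) (tdiff_basis r b V) = ((\<lambda>_. 0) :: _ \<Rightarrow> 'k)"
    using tdiff_tdiff_basis[OF P_finite P_subset, OF \<open>V \<in> P\<close> \<open>V \<in> P\<close>]
    by (simp flip: tdiff_eq_lin_ext)
  then show "lin_ext (\<lambda>p. tdiff_basis r (fst p) (snd p)) (tdiff_basis r b V)
      \<in> (induced_span r P :: (_ \<Rightarrow> 'k) set)"
    by (simp add: induced_span_zero)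
qed

lemma tmul_basis_in_induced_span:
  assumes "W \<subseteq> G" "V \<in> P"
  shows "(tmul_basis r a W b V :: _ \<Rightarrow> 'k::field) \<in> induced_span r P"
proof (cases "W \<inter> V = {}")
  case True
  have "W \<union> V \<in> P" using P_upward[OF assms(2)] P_subset[OF assms(2)] assms(1) by blast
  then show ?thesis unfolding tmul_basis_disjoint[OF True]
    by (intro induced_span_smult tbasis_in_induced_span)
next
  case False
  show ?thesis unfolding tmul_basis_overlapping[OF False] by (rule induced_span_zero)
qed

lemma tmul_tdiff_basis_in_induced_span:
  assumes fW: "finite W" and WG: "W \<subseteq> G" and V: "V \<in> P"
  shows "lin_ext (\<lambda>q. tmul_basis r a W (fst q) (snd q)) (tdiff_basis r b V)
      \<in> (induced_span r P :: (_ \<Rightarrow> 'k::field) set)"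
proof -
  have fV: "finite V" and VG: "V \<subseteq> G" using P_finite[OF V] P_subset[OF V] .
  show ?thesis
  proof (cases "W \<inter> V = {}")
    case disj: True
    have "W \<union> V \<in> P" using P_upward[OF V] WG VG by blast
    then have "tdiff_basis r c (W \<union> V) \<in> (induced_span r P :: (_ \<Rightarrow> 'k) set)" for c
      by (rule tdiff_basis_in_induced_span)
    moreover have "(\<lambda>z. \<Sum>x\<in>W. tdiff_term r c (W \<union> V) x z) \<in> (induced_span r P :: (_ \<Rightarrow> 'k) set)" for c
    proof (rule induced_span_sum[OF fW])
      fix x assume "x \<in> W"
      then have "W \<union> V - {x} \<in> P" using P_upward[OF V, of "W \<union> V - {x}"] disj WG VG by auto
      then show "tdiff_term r c (W \<union> V) x \<in> induced_span r P" by (rule tdiff_term_in_induced_span)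
    qed
    ultimately show ?thesis
      unfolding tmul_tdiff_basis_disjoint[OF fW fV WG VG disj] by (rule induced_span_lin_comb)
  next
    case overlap: False
    have "(\<lambda>z. (-1::'k) ^ sigma_el r v V
        * tmul_basis r a W (madd b (msub (mlcm V) (mlcm (V - {v})))) (V - {v}) z) \<in> induced_span r P"
      if "v \<in> V" for v
    proof (cases "W \<inter> (V - {v}) = {}")
      case True
      then have "W \<union> (V - {v}) = W \<union> V" using overlap that by auto
      then have "W \<union> (V - {v}) \<in> P" using P_upward[OF V] WG VG by auto
      then show ?thesis unfolding tmul_basis_disjoint[OF True] mult.assoc[symmetric]
        by (intro induced_span_smult tbasis_in_induced_span)
    next
      case False
      then show ?thesis unfolding tmul_basis_overlapping[OF False] by (simp add: induced_span_zero)
    qed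
    then show ?thesis unfolding tdiff_basis_eq_sum_terms tdiff_term_def
      by (simp add: lin_ext_sum_tbasis[OF fV] induced_span_sum[OF fV])
  qed
qed

lemma tmul_in_induced_span:
  assumes f: "f \<in> taylor G" and j: "j \<in> (induced_span r P :: (_ \<Rightarrow> 'k::field) set)"
  shows "tmul r f j \<in> induced_span r P"
proof -
  have basis: "tmul r (tbasis a W) j \<in> induced_span r P" if "finite W" "W \<subseteq> G" for a W
    unfolding tmul_tbasis_eq_lin_ext
    by (rule lin_ext_in_induced_span[OF j])
      (simp_all add: that tmul_basis_in_induced_span tmul_tdiff_basis_in_induced_span)
  show ?thesis unfolding tmul_eq_sum_tbasis[OF taylor_finite_tsupp[OF f]]
  proof (rule induced_span_sum[OF taylor_finite_tsupp[OF f]])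
    fix p assume "p \<in> tsupp f"
    then have "f (fst p, snd p) \<noteq> 0" by (simp add: tsupp_def)
    then have "finite (snd p) \<and> snd p \<subseteq> G" using f unfolding taylor_def by blast
    then show "(\<lambda>c. f p * tmul r (tbasis (fst p) (snd p)) j c) \<in> induced_span r P"
      by (intro induced_span_smult basis) auto
  qed
qed

lemma dg_ideal_induced_span: "dg_ideal G r (induced_span r P :: (_ \<Rightarrow> 'k::field) set)"
  unfolding dg_ideal_def
  using induced_span_subset_taylor tdiff_in_induced_span tmul_in_induced_span by blast

end

lemma morse_matching_source:
  assumes "morse_matching G A" "V \<in> fst ` A"
  shows "finite V \<and> V \<subseteq> G"
proof -
  obtain \<tau> where "(V, \<tau>) \<in> A" using assms(2) by force
  then have "(V, \<tau>) \<in> taylor_edges G" using assms(1) unfolding morse_matching_def by blast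
  then show ?thesis unfolding taylor_edges_def by blast
qed

theorem mainTheorem1:
  fixes I :: "('v::finite) mon set"
    and r :: "('v mon \<times> 'v mon) set"
    and A :: "('v mon set \<times> 'v mon set) set"
  assumes "mono_ideal I"
    and "strict_linear_order_on (mingens I) r"
    and "morse_matching (mingens I) A"
    and "\<And>V W. V \<in> fst ` A \<Longrightarrow> V \<subseteq> W \<Longrightarrow> W \<subseteq> mingens I \<Longrightarrow> W \<in> fst ` A"
  shows "dg_ideal (mingens I) r (induced_sub r A :: ('v mon \<times> 'v mon set \<Rightarrow> 'k::field) set)"
proof -
  interpret upward_closed_family "mingens I" r "fst ` A"
  proof
    show "strict_linear_order_on (mingens I) r" by (rule assms(2))
  qed (use assms(4) morse_matching_source[OF assms(3)] in blast)+
  show ?thesis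
    using dg_ideal_induced_span unfolding induced_sub_def induced_span_def .
qed

end
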